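(* Let $N, N_{\tilde y}, M \in \mathbb{N}$, $X\in\mathbb{R}^{N\times M}$, $\tilde Y \in \mathbb{R}^{N_{\tilde y}\times M}$, $\lambda\ge0$, $\Omega=\{1,\dots,N\}$. Let $\tilde Y = U\Sigma V$ be a singular value decomposition with $U\in\mathbb{R}^{N_{\tilde y}\times N_{\tilde y}}$, $V\in\mathbb{R}^{M\times M}$ orthogonal and $\Sigma\in\mathbb{R}^{N_{\tilde y}\times M}$ having diagonal entries $\sigma_1(\tilde Y)\ge\sigma_2(\tilde Y)\ge\cdots$ and zeros elsewhere. For $r\le\operatorname{rank}\tilde Y$ let $Z = \Sigma_{1:r,1:r}V_{1:r}\in\mathbb{R}^{r\times M}$, where $V_{1:r}$ denotes the first $r$ rows of $V$. Then for any $S\subset\Omega$ with $X_SX_S^\top+\lambda I_{|S|}\succ0$ (or $S=\emptyset$), \[ 0 \le J_{\tilde Y}(S) - J_Z(S) \le \sum_{i=r+1}^{\operatorname{rank}\tilde Y}\sigma_i^2(\tilde Y). \]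
   Context: For a matrix $Y$ with $M$ columns and $S\subset\Omega$ with $X_SX_S^\top+\lambda I_{|S|}\succ0$, $J_Y(S) = \operatorname{tr}\{ Y X_S^\top (X_S X_S^\top + \lambda I_{|S|})^{-1} X_S Y^\top \}$, where $X_S$ is the submatrix of $X$ consisting of the rows indexed by $S$; $J_Y(\emptyset)=0$. *)

theory Defs
  imports "Jordan_Normal_Form.DL_Rank" "Jordan_Normal_Form.DL_Submatrix"
    "Jordan_Normal_Form.Gauss_Jordan_Elimination"
begin

text \<open>Matrices are Jordan_Normal_Form matrices; rows/columns are indexed from 0,
  so \<Omega> = {1..N} becomes {0..<N}.\<close>

definition rows_sub :: "real mat \<Rightarrow> nat set \<Rightarrow> real mat" where
  "rows_sub X S = submatrix X S {0..<dim_col X}"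

definition pos_def_mat :: "real mat \<Rightarrow> bool" where
  "pos_def_mat A \<longleftrightarrow> dim_row A = dim_col A \<and> transpose_mat A = A \<and>
     (\<forall>v \<in> carrier_vec (dim_row A). v \<noteq> 0\<^sub>v (dim_row A) \<longrightarrow> scalar_prod v (A *\<^sub>v v) > 0)"

definition gram_reg :: "real mat \<Rightarrow> real \<Rightarrow> nat set \<Rightarrow> real mat" where
  "gram_reg X lam S = rows_sub X S * transpose_mat (rows_sub X S)
      + lam \<cdot>\<^sub>m 1\<^sub>m (dim_row (rows_sub X S))"

definition mat_trace :: "real mat \<Rightarrow> real" where
  "mat_trace A = (\<Sum>i<dim_row A. A $$ (i, i))"

definition J :: "real mat \<Rightarrow> real mat \<Rightarrow> real \<Rightarrow> nat set \<Rightarrow> real" where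
  "J X Y lam S = (if S = {} then 0 else
     mat_trace (Y * transpose_mat (rows_sub X S) * the (mat_inverse (gram_reg X lam S))
            * rows_sub X S * transpose_mat Y))"

end

theory Submission
  imports Defs
begin

text \<open>Write \<open>H = X\<^sub>S\<^sup>T (X\<^sub>S X\<^sub>S\<^sup>T + \<lambda> I)\<^sup>-\<^sup>1 X\<^sub>S\<close>, so that \<open>J\<^sub>Y(S) = tr (Y H Y\<^sup>T)\<close> is the
  sum of the quadratic forms \<open>y\<^sup>T H y\<close> over the rows \<open>y\<close> of \<open>Y\<close>. With
  \<open>u = (X\<^sub>S X\<^sub>S\<^sup>T + \<lambda> I)\<^sup>-\<^sup>1 X\<^sub>S v\<close> one has \<open>v\<^sup>T H v = |H v|\<^sup>2 + \<lambda> |u|\<^sup>2\<close>, which together with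
  \<open>|v - H v|\<^sup>2 \<ge> 0\<close> gives \<open>0 \<le> v\<^sup>T H v \<le> |v|\<^sup>2\<close>. The orthogonal factor \<open>U\<close> drops out of
  the trace, so \<open>J(\<tilde>Y, S) = \<Sum>\<^sub>i \<sigma>\<^sub>i\<^sup>2 q\<^sub>i\<close> with \<open>q\<^sub>i = v\<^sub>i\<^sup>T H v\<^sub>i \<in> [0, 1]\<close> for the rows
  \<open>v\<^sub>i\<close> of \<open>V\<close>, while \<open>J(Z, S)\<close> is the same sum truncated at \<open>r\<close>. Finally \<open>\<sigma>\<^sub>i = 0\<close>
  from the rank on, since otherwise the first \<open>i + 1\<close> columns of \<open>U \<Sigma> = \<tilde>Y V\<^sup>T\<close> would be
  linearly independent.\<close>

lemma mat_trace_mult_comm: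
  fixes A B :: "real mat"
  assumes A: "A \<in> carrier_mat n m" and B: "B \<in> carrier_mat m n"
  shows "mat_trace (A * B) = mat_trace (B * A)"
proof -
  have "mat_trace (A * B) = (\<Sum>i<n. \<Sum>j<m. A $$ (i, j) * B $$ (j, i))"
    using A B by (simp add: mat_trace_def scalar_prod_def atLeast0LessThan)
  also have "\<dots> = (\<Sum>j<m. \<Sum>i<n. B $$ (j, i) * A $$ (i, j))"
    by (subst sum.swap) (simp add: mult.commute)
  also have "\<dots> = mat_trace (B * A)"
    using A B by (simp add: mat_trace_def scalar_prod_def atLeast0LessThan)
  finally show ?thesis .
qed

lemma mat_trace_mult_transpose_rows:
  fixes Y P :: "real mat"
  assumes Y: "Y \<in> carrier_mat n m" and P: "P \<in> carrier_mat m m"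
  shows "mat_trace (Y * P * transpose_mat Y) = (\<Sum>i<n. row Y i \<bullet> (P *\<^sub>v row Y i))"
proof -
  have "(Y * P * transpose_mat Y) $$ (i, i) = row Y i \<bullet> (P *\<^sub>v row Y i)" if "i < n" for i
  proof -
    have "Y * P * transpose_mat Y = Y * (P * transpose_mat Y)"
      using Y P by (intro assoc_mult_mat) auto
    moreover have "col (P * transpose_mat Y) i = P *\<^sub>v row Y i"
      using Y P that by (subst col_mult2) auto
    ultimately show ?thesis
      using Y P that by simp
  qed
  then show ?thesis
    using Y P by (simp add: mat_trace_def)
qed

lemma mat_trace_orthogonal_left:
  fixes U W P :: "real mat"
  assumes U: "U \<in> carrier_mat n n" "transpose_mat U * U = 1\<^sub>m n"
    and W: "W \<in> carrier_mat n m" and P: "P \<in> carrier_mat m m"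
  shows "mat_trace (U * W * P * transpose_mat (U * W)) = mat_trace (W * P * transpose_mat W)"
proof -
  define Q where "Q = W * P * transpose_mat W"
  have Q: "Q \<in> carrier_mat n n"
    unfolding Q_def using W P by auto
  have "U * W * P * transpose_mat (U * W) = U * (W * P) * (transpose_mat W * transpose_mat U)"
    using U W P by (simp add: transpose_mult assoc_mult_mat)
  also have "\<dots> = U * (W * P * (transpose_mat W * transpose_mat U))"
    using U W P by (intro assoc_mult_mat) auto
  also have "W * P * (transpose_mat W * transpose_mat U) = Q * transpose_mat U"
    unfolding Q_def using W P U by (intro assoc_mult_mat[symmetric]) auto
  finally have "U * W * P * transpose_mat (U * W) = U * (Q * transpose_mat U)" .
  then have "mat_trace (U * W * P * transpose_mat (U * W)) = mat_trace (Q * transpose_mat U * U)"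
    using mat_trace_mult_comm[OF U(1), of "Q * transpose_mat U"] Q U by simp
  also have "Q * transpose_mat U * U = Q"
    using Q U by (simp add: assoc_mult_mat[OF Q, of _ n _ n])
  finally show ?thesis
    unfolding Q_def .
qed

lemma scalar_prod_self_ge_0: "(v :: real vec) \<bullet> v \<ge> 0"
  unfolding scalar_prod_def by (intro sum_nonneg) auto

lemma ridge_quadratic_form_bounds:
  fixes A B :: "real mat" and lam :: real
  assumes A: "A \<in> carrier_mat k m" and B: "B \<in> carrier_mat k k"
    and inverse: "(A * transpose_mat A + lam \<cdot>\<^sub>m 1\<^sub>m k) * B = 1\<^sub>m k"
    and lam: "lam \<ge> 0" and v: "v \<in> carrier_vec m"
  shows "0 \<le> v \<bullet> ((transpose_mat A * B * A) *\<^sub>v v)"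
    and "v \<bullet> ((transpose_mat A * B * A) *\<^sub>v v) \<le> v \<bullet> v"
proof -
  define u where "u = B *\<^sub>v (A *\<^sub>v v)"
  define y where "y = transpose_mat A *\<^sub>v u"
  have u: "u \<in> carrier_vec k" and y: "y \<in> carrier_vec m"
    unfolding u_def y_def using A B v by auto
  have Hv: "(transpose_mat A * B * A) *\<^sub>v v = y"
    unfolding y_def u_def using A B v by (simp add: assoc_mult_mat_vec[of _ m k _ m])
  have "A *\<^sub>v v = ((A * transpose_mat A + lam \<cdot>\<^sub>m 1\<^sub>m k) * B) *\<^sub>v (A *\<^sub>v v)"
    using A v by (simp add: inverse)
  also have "\<dots> = (A * transpose_mat A + lam \<cdot>\<^sub>m 1\<^sub>m k) *\<^sub>v u"
    unfolding u_def using A B v by (intro assoc_mult_mat_vec) auto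
  also have "\<dots> = A *\<^sub>v y + lam \<cdot>\<^sub>v u"
  proof -
    have "(lam \<cdot>\<^sub>m 1\<^sub>m k) *\<^sub>v u = lam \<cdot>\<^sub>v u"
      using u by (intro eq_vecI) (auto simp: scalar_prod_def if_distrib if_distribR cong: if_cong)
    then show ?thesis
      unfolding y_def using A u by (simp add: add_mult_distrib_mat_vec[of _ k k] assoc_mult_mat_vec)
  qed
  finally have Av: "A *\<^sub>v v = A *\<^sub>v y + lam \<cdot>\<^sub>v u" .
  have "v \<bullet> y = y \<bullet> v"
    by (rule comm_scalar_prod[OF v y])
  also have "\<dots> = u \<bullet> (A *\<^sub>v v)"
    unfolding y_def by (rule transpose_vec_mult_scalar[OF A v u])
  also have "\<dots> = u \<bullet> (A *\<^sub>v y) + lam * (u \<bullet> u)"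
    unfolding Av using A u y by (simp add: scalar_prod_add_distrib[of _ k])
  also have "u \<bullet> (A *\<^sub>v y) = y \<bullet> y"
    by (metis transpose_vec_mult_scalar[OF A y u] y_def)
  finally have vy: "v \<bullet> y = y \<bullet> y + lam * (u \<bullet> u)" .
  have "0 \<le> (v - y) \<bullet> (v - y)"
    by (rule scalar_prod_self_ge_0)
  then have "0 \<le> v \<bullet> v - 2 * (v \<bullet> y) + y \<bullet> y"
    using v y
    by (simp add: minus_scalar_prod_distrib scalar_prod_minus_distrib comm_scalar_prod[OF y v])
  moreover have "lam * (u \<bullet> u) \<ge> 0"
    using lam scalar_prod_self_ge_0 by simp
  ultimately show "0 \<le> v \<bullet> ((transpose_mat A * B * A) *\<^sub>v v)"
    and "v \<bullet> ((transpose_mat A * B * A) *\<^sub>v v) \<le> v \<bullet> v"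
    unfolding Hv using vy scalar_prod_self_ge_0[of y] by linarith+
qed

lemma rows_sub_carrier:
  assumes X: "X \<in> carrier_mat N M" and S: "S \<subseteq> {0..<N}"
  shows "rows_sub X S \<in> carrier_mat (card S) M"
proof -
  have "{i. i < dim_row X \<and> i \<in> S} = S" and "{j. j < dim_col X \<and> j \<in> {0..<dim_col X}} = {0..<M}"
    using X S by auto
  then show ?thesis
    using X unfolding rows_sub_def carrier_mat_def by (simp add: dim_submatrix)
qed

lemma pos_def_mat_inverse:
  assumes pd: "pos_def_mat G" and G: "G \<in> carrier_mat k k"
  shows "G * the (mat_inverse G) = 1\<^sub>m k" and "the (mat_inverse G) \<in> carrier_mat k k"
proof -
  have "det G \<noteq> 0"
  proof
    assume "det G = 0"
    then obtain v where v: "v \<in> carrier_vec k" "v \<noteq> 0\<^sub>v k" "G *\<^sub>v v = 0\<^sub>v k"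
      using det_0_iff_vec_prod_zero_field[OF G] by blast
    have "v \<bullet> (G *\<^sub>v v) > 0"
      using pd v G unfolding pos_def_mat_def by auto
    then show False
      using v by simp
  qed
  then have "G \<in> Units (ring_mat TYPE(real) k ())"
    by (rule det_non_zero_imp_unit[OF G])
  then obtain B where "mat_inverse G = Some B"
    using mat_inverse(1)[OF G] by fastforce
  then show "G * the (mat_inverse G) = 1\<^sub>m k" and "the (mat_inverse G) \<in> carrier_mat k k"
    using mat_inverse(2)[OF G] by auto
qed

definition ridge_hat_mat :: "real mat \<Rightarrow> real \<Rightarrow> nat set \<Rightarrow> real mat" where
  "ridge_hat_mat X lam S =
     transpose_mat (rows_sub X S) * the (mat_inverse (gram_reg X lam S)) * rows_sub X S"

context
  fixes X :: "real mat" and N M :: nat and lam :: real and S :: "nat set"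
  assumes X: "X \<in> carrier_mat N M" and S: "S \<subseteq> {0..<N}"
    and pd: "pos_def_mat (gram_reg X lam S)"
begin

private lemma rows_sub: "rows_sub X S \<in> carrier_mat (card S) M"
  by (rule rows_sub_carrier[OF X S])

private lemma gram_reg_inverse:
  "gram_reg X lam S * the (mat_inverse (gram_reg X lam S)) = 1\<^sub>m (card S)"
  "the (mat_inverse (gram_reg X lam S)) \<in> carrier_mat (card S) (card S)"
proof -
  have "gram_reg X lam S \<in> carrier_mat (card S) (card S)"
    using rows_sub unfolding gram_reg_def by auto
  then show "gram_reg X lam S * the (mat_inverse (gram_reg X lam S)) = 1\<^sub>m (card S)"
    and "the (mat_inverse (gram_reg X lam S)) \<in> carrier_mat (card S) (card S)"
    using pos_def_mat_inverse[OF pd] by auto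
qed

lemma ridge_hat_mat_carrier: "ridge_hat_mat X lam S \<in> carrier_mat M M"
  unfolding ridge_hat_mat_def using rows_sub gram_reg_inverse by auto

lemma J_eq_trace_ridge_hat_mat:
  assumes "S \<noteq> {}" and Y: "Y \<in> carrier_mat n M"
  shows "J X Y lam S = mat_trace (Y * ridge_hat_mat X lam S * transpose_mat Y)"
proof -
  define A where "A = rows_sub X S"
  define B where "B = the (mat_inverse (gram_reg X lam S))"
  have A: "A \<in> carrier_mat (card S) M" and B: "B \<in> carrier_mat (card S) (card S)"
    unfolding A_def B_def using rows_sub gram_reg_inverse by auto
  have "Y * transpose_mat A * B * A = Y * (transpose_mat A * B * A)"
    using Y A B by (simp add: assoc_mult_mat[of _ n M _ "card S" _ "card S"]
        assoc_mult_mat[of _ n M _ "card S" _ M])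
  then show ?thesis
    using \<open>S \<noteq> {}\<close> unfolding J_def ridge_hat_mat_def A_def B_def by simp
qed

lemma ridge_hat_mat_quadratic_form_bounds:
  assumes "lam \<ge> 0" and v: "v \<in> carrier_vec M"
  shows "0 \<le> v \<bullet> (ridge_hat_mat X lam S *\<^sub>v v)" and "v \<bullet> (ridge_hat_mat X lam S *\<^sub>v v) \<le> v \<bullet> v"
  using ridge_quadratic_form_bounds[OF rows_sub gram_reg_inverse(2) _ assms] gram_reg_inverse(1) rows_sub
  unfolding ridge_hat_mat_def gram_reg_def by auto

end

lemma quadratic_form_smult:
  fixes P :: "real mat"
  assumes P: "P \<in> carrier_mat m m" and v: "v \<in> carrier_vec m"
  shows "(c \<cdot>\<^sub>v v) \<bullet> (P *\<^sub>v (c \<cdot>\<^sub>v v)) = c\<^sup>2 * (v \<bullet> (P *\<^sub>v v))"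
  using P v by (simp add: mult_mat_vec power2_eq_square)

lemma row_diag_mult:
  fixes Sig V :: "real mat"
  assumes Sig: "Sig \<in> carrier_mat n m" "\<And>i j. i < n \<Longrightarrow> j < m \<Longrightarrow> i \<noteq> j \<Longrightarrow> Sig $$ (i, j) = 0"
    and V: "V \<in> carrier_mat m p" and i: "i < n"
  shows "row (Sig * V) i = (if i < m then Sig $$ (i, i) \<cdot>\<^sub>v row V i else 0\<^sub>v p)"
proof (rule eq_vecI)
  fix j assume "j < dim_vec (if i < m then Sig $$ (i, i) \<cdot>\<^sub>v row V i else 0\<^sub>v p)"
  then have j: "j < p"
    using V by (auto split: if_splits)
  have "row (Sig * V) i $ j = (\<Sum>t\<in>{0..<m}. Sig $$ (i, t) * V $$ (t, j))"
    using Sig V i j by (simp add: scalar_prod_def)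
  also have "\<dots> = (\<Sum>t\<in>{0..<m}. if t = i then Sig $$ (i, i) * V $$ (i, j) else 0)"
    by (rule sum.cong) (use Sig(2) i in auto)
  finally show "row (Sig * V) i $ j = (if i < m then Sig $$ (i, i) \<cdot>\<^sub>v row V i else 0\<^sub>v p) $ j"
    using V j by auto
qed (use Sig V in auto)

lemma mat_trace_svd_quadratic:
  fixes U Sig V P :: "real mat"
  assumes U: "U \<in> carrier_mat n n" "transpose_mat U * U = 1\<^sub>m n"
    and Sig: "Sig \<in> carrier_mat n m" "\<And>i j. i < n \<Longrightarrow> j < m \<Longrightarrow> i \<noteq> j \<Longrightarrow> Sig $$ (i, j) = 0"
    and V: "V \<in> carrier_mat m m" and P: "P \<in> carrier_mat m m"
  shows "mat_trace (U * Sig * V * P * transpose_mat (U * Sig * V))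
    = (\<Sum>i<min n m. (Sig $$ (i, i))\<^sup>2 * (row V i \<bullet> (P *\<^sub>v row V i)))"
proof -
  have SV: "Sig * V \<in> carrier_mat n m"
    using Sig V by auto
  have "U * Sig * V = U * (Sig * V)"
    using U Sig V by (intro assoc_mult_mat) auto
  then have "mat_trace (U * Sig * V * P * transpose_mat (U * Sig * V))
      = (\<Sum>i<n. row (Sig * V) i \<bullet> (P *\<^sub>v row (Sig * V) i))"
    using mat_trace_orthogonal_left[OF U SV P] mat_trace_mult_transpose_rows[OF SV P] by simp
  also have "\<dots> = (\<Sum>i<n. if i < m then (Sig $$ (i, i))\<^sup>2 * (row V i \<bullet> (P *\<^sub>v row V i)) else 0)"
    using V P by (intro sum.cong)
      (auto simp: row_diag_mult[OF Sig V] quadratic_form_smult simp del: scalar_prod_smult_left)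
  also have "\<dots> = (\<Sum>i<min n m. (Sig $$ (i, i))\<^sup>2 * (row V i \<bullet> (P *\<^sub>v row V i)))"
    by (simp add: sum.If_cases lessThan_def Collect_conj_eq[symmetric] min_less_iff_conj)
  finally show ?thesis .
qed

lemma mat_trace_truncated_quadratic:
  fixes Sig V P :: "real mat"
  assumes V: "V \<in> carrier_mat m m" and P: "P \<in> carrier_mat m m" and r: "r \<le> m"
  shows "mat_trace (mat r m (\<lambda>(i, j). Sig $$ (i, i) * V $$ (i, j)) * P
      * transpose_mat (mat r m (\<lambda>(i, j). Sig $$ (i, i) * V $$ (i, j))))
    = (\<Sum>i<r. (Sig $$ (i, i))\<^sup>2 * (row V i \<bullet> (P *\<^sub>v row V i)))"
proof -
  define Z where "Z = mat r m (\<lambda>(i, j). Sig $$ (i, i) * V $$ (i, j))"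
  have Z: "Z \<in> carrier_mat r m"
    unfolding Z_def by simp
  have "row Z i = Sig $$ (i, i) \<cdot>\<^sub>v row V i" if "i < r" for i
    unfolding Z_def using that r V by (intro eq_vecI) auto
  then have "mat_trace (Z * P * transpose_mat Z) = (\<Sum>i<r. (Sig $$ (i, i))\<^sup>2 * (row V i \<bullet> (P *\<^sub>v row V i)))"
    unfolding mat_trace_mult_transpose_rows[OF Z P] using V P r
    by (intro sum.cong) (auto simp: quadratic_form_smult simp del: scalar_prod_smult_left)
  then show ?thesis
    unfolding Z_def .
qed

lemma (in vec_space) mult_mat_vec_in_span_cols:
  assumes A: "A \<in> carrier_mat n nc" and v: "v \<in> carrier_vec nc"
  shows "A *\<^sub>v v \<in> span (set (cols A))"
proof -
  have cols: "set (cols A) \<subseteq> carrier_vec n"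
    using A cols_dim by blast
  have "vec (length (cols A)) (\<lambda>i. v $ i) = v"
    using A v by (intro eq_vecI) auto
  moreover have "\<forall>w \<in> set (cols A). dim_vec w = n"
    using cols by auto
  ultimately have "lincomb_list (\<lambda>i. v $ i) (cols A) = A *\<^sub>v v"
    using lincomb_list_as_mat_mult[where ws = "cols A" and c = "\<lambda>i. v $ i"] A mat_of_cols_cols[of A]
    by auto
  then show ?thesis
    using span_list_as_span[OF cols] in_span_listI[where c = "\<lambda>i. v $ i" and vs = "cols A"] by auto
qed

lemma (in vec_space) rank_mult_le:
  assumes A: "A \<in> carrier_mat n nc" and B: "B \<in> carrier_mat nc p"
  shows "rank (A * B) \<le> rank A"
proof -
  have AB: "A * B \<in> carrier_mat n p"
    using A B by auto
  have cols: "set (cols A) \<subseteq> carrier_vec n" "set (cols (A * B)) \<subseteq> carrier_vec n"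
    using A AB cols_dim by blast+
  have "col (A * B) j \<in> span (set (cols A))" if "j < p" for j
    unfolding col_mult2[OF A B that] using B that by (intro mult_mat_vec_in_span_cols[OF A]) auto
  then have "set (cols (A * B)) \<subseteq> span (set (cols A))"
    using AB B by (auto simp: in_set_conv_nth)
  then have "span (set (cols (A * B))) \<subseteq> span (set (cols A))"
    by (rule span_subsetI[OF cols(1)])
  moreover have span_A: "VectorSpace.subspace class_ring (span (set (cols A))) V"
    using cols(1) by (rule span_is_subspace)
  ultimately have "VectorSpace.subspace class_ring (span (set (cols (A * B)))) (vs (span (set (cols A))))"
    using nested_subspaces span_is_subspace[OF cols(2)] by blast
  from vectorspace.subspace_dim[OF subspace_is_vs[OF span_A] this fin_dim_span_cols[OF A]]
  show ?thesis
    unfolding rank_def using fin_dim_span_cols[OF AB] by simp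
qed

lemma (in vec_space) rank_le_nr:
  assumes A: "A \<in> carrier_mat n nc"
  shows "rank A \<le> n"
proof -
  have "set (cols A) \<subseteq> carrier_vec n"
    using A cols_dim by blast
  then have "VectorSpace.subspace class_ring (span (set (cols A))) V"
    by (rule span_is_subspace)
  from subspace_dim[OF this fin_dim] have "rank A \<le> dim"
    unfolding rank_def using fin_dim_span_cols[OF A] by simp
  then show ?thesis
    using dim_is_n by simp
qed

lemma (in vec_space) rank_eq_nc_if_trivial_kernel:
  assumes C: "C \<in> carrier_mat n nc"
    and trivial_kernel: "\<And>v. v \<in> carrier_vec nc \<Longrightarrow> C *\<^sub>v v = 0\<^sub>v n \<Longrightarrow> v = 0\<^sub>v nc"
  shows "rank C = nc"
proof -
  have unit: "C *\<^sub>v unit_vec nc a = col C a" if "a < nc" for a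
    using C that by (intro eq_vecI) (auto simp: scalar_prod_right_unit)
  have distinct: "distinct (cols C)"
  proof (subst distinct_conv_nth, intro allI impI)
    fix a b assume a: "a < length (cols C)" and b: "b < length (cols C)" and "a \<noteq> b"
    show "cols C ! a \<noteq> cols C ! b"
    proof
      assume "cols C ! a = cols C ! b"
      then have "C *\<^sub>v (unit_vec nc a - unit_vec nc b) = 0\<^sub>v n"
        using C a b unit by (auto simp: mult_minus_distrib_mat_vec[OF C])
      then have "unit_vec nc a - unit_vec nc b = (0\<^sub>v nc :: 'a vec)"
        by (rule trivial_kernel[rotated]) simp
      then have "(unit_vec nc a - unit_vec nc b) $ a = (0 :: 'a)"
        using C a by simp
      then show False
        using C a b \<open>a \<noteq> b\<close> by simp
    qed
  qed
  moreover have "lin_indpt (set (cols C))"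
    using lin_depE[OF C _ distinct] trivial_kernel by metis
  ultimately show ?thesis
    by (rule lin_indpt_full_rank[OF C])
qed

lemma diag_mult_vec_index:
  fixes D :: "real mat"
  assumes D: "D \<in> carrier_mat n m" "\<And>i j. i < n \<Longrightarrow> j < m \<Longrightarrow> i \<noteq> j \<Longrightarrow> D $$ (i, j) = 0"
    and w: "w \<in> carrier_vec m" and a: "a < n" "a < m"
  shows "(D *\<^sub>v w) $ a = D $$ (a, a) * w $ a"
proof -
  have "(D *\<^sub>v w) $ a = (\<Sum>t\<in>{0..<m}. D $$ (a, t) * w $ t)"
    using D w a by (simp add: scalar_prod_def)
  also have "\<dots> = D $$ (a, a) * w $ a"
    using D(2) a by (subst sum.remove[of _ a]) (auto intro!: sum.neutral)
  finally show ?thesis .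
qed

lemma svd_diag_eq_0_beyond_rank:
  fixes U Sig V :: "real mat"
  assumes U: "U \<in> carrier_mat n n" "transpose_mat U * U = 1\<^sub>m n"
    and V: "V \<in> carrier_mat m m" "V * transpose_mat V = 1\<^sub>m m"
    and Sig: "Sig \<in> carrier_mat n m"
      "\<And>i j. i < n \<Longrightarrow> j < m \<Longrightarrow> i \<noteq> j \<Longrightarrow> Sig $$ (i, j) = 0"
      "\<And>i. i < min n m \<Longrightarrow> Sig $$ (i, i) \<ge> 0"
      "\<And>i j. i \<le> j \<Longrightarrow> j < min n m \<Longrightarrow> Sig $$ (j, j) \<le> Sig $$ (i, i)"
    and i: "vec_space.rank n (U * Sig * V) \<le> i" "i < min n m"
  shows "Sig $$ (i, i) = 0"
proof (rule ccontr)
  assume "Sig $$ (i, i) \<noteq> 0"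
  then have pos: "Sig $$ (a, a) > 0" if "a \<le> i" for a
    using Sig(3)[OF i(2)] Sig(4)[OF that i(2)] by linarith
  define p where "p = Suc i"
  define E :: "real mat" where "E = mat m p (\<lambda>(a, b). if a = b then 1 else 0)"
  define C where "C = U * (Sig * E)"
  \<comment> \<open>the first \<open>p\<close> columns of \<open>U * Sig = (U * Sig * V) * V\<^sup>T\<close>\<close>
  have E: "E \<in> carrier_mat m p" and C: "C \<in> carrier_mat n p"
    unfolding E_def C_def using U Sig by auto
  have "U * Sig * V * (transpose_mat V * E) = U * Sig * (V * (transpose_mat V * E))"
    using U Sig V E by (intro assoc_mult_mat) auto
  also have "V * (transpose_mat V * E) = (V * transpose_mat V) * E"
    using V E by (intro assoc_mult_mat[symmetric]) auto
  also have "U * Sig * ((V * transpose_mat V) * E) = C"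
    unfolding C_def using U Sig V E by (simp add: assoc_mult_mat[of _ n n _ m _ p])
  finally have "vec_space.rank n C \<le> i"
    using vec_space.rank_mult_le[of "U * Sig * V" n m "transpose_mat V * E" p] U Sig V E i(1)
    by auto
  moreover have "vec_space.rank n C = p"
  proof (rule vec_space.rank_eq_nc_if_trivial_kernel[OF C])
    fix w :: "real vec" assume w: "w \<in> carrier_vec p" and Cw: "C *\<^sub>v w = 0\<^sub>v n"
    have Ew: "E *\<^sub>v w \<in> carrier_vec m"
      using E w by simp
    have "C *\<^sub>v w = U *\<^sub>v (Sig *\<^sub>v (E *\<^sub>v w))"
      unfolding C_def using U Sig E w
      by (simp add: assoc_mult_mat_vec[of _ n n _ p] assoc_mult_mat_vec[of _ n m _ p])
    then have "Sig *\<^sub>v (E *\<^sub>v w) = transpose_mat U *\<^sub>v 0\<^sub>v n"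
      using assoc_mult_mat_vec[of "transpose_mat U" n n U n "Sig *\<^sub>v (E *\<^sub>v w)"] U Sig Ew Cw
    by simp
    then have SEw: "Sig *\<^sub>v (E *\<^sub>v w) = 0\<^sub>v n"
      using U by auto
    show "w = 0\<^sub>v p"
    proof (rule eq_vecI)
      fix a assume "a < dim_vec (0\<^sub>v p)"
      then have a: "a < p" "a < n" "a < m"
        using i(2) unfolding p_def by auto
      have "(E *\<^sub>v w) $ a = w $ a"
        using w a unfolding E_def by (simp add: scalar_prod_def of_bool_def[symmetric])
      then have "Sig $$ (a, a) * w $ a = 0"
        using diag_mult_vec_index[OF Sig(1,2) Ew a(2,3)] SEw a by simp
      then show "w $ a = 0\<^sub>v p $ a"
        using pos[of a] a unfolding p_def by simp
    qed (use w in auto)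
  qed
  ultimately show False
    unfolding p_def by simp
qed

lemma orthogonal_mat_row_norm:
  fixes V :: "real mat"
  assumes V: "V \<in> carrier_mat m m" "V * transpose_mat V = 1\<^sub>m m" and i: "i < m"
  shows "row V i \<bullet> row V i = 1"
proof -
  have "row V i \<bullet> row V i = (V * transpose_mat V) $$ (i, i)"
    using V(1) i by simp
  also have "\<dots> = 1"
    unfolding V(2) using i by simp
  finally show ?thesis .
qed

lemma weighted_tail_sum_bounds:
  fixes s q :: "nat \<Rightarrow> real"
  assumes "r \<le> R" "R \<le> L"
    and q: "\<And>i. i < L \<Longrightarrow> 0 \<le> q i \<and> q i \<le> 1"
    and s: "\<And>i. R \<le> i \<Longrightarrow> i < L \<Longrightarrow> s i = 0"
  shows "0 \<le> (\<Sum>i<L. (s i)\<^sup>2 * q i) - (\<Sum>i<r. (s i)\<^sup>2 * q i)"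
    and "(\<Sum>i<L. (s i)\<^sup>2 * q i) - (\<Sum>i<r. (s i)\<^sup>2 * q i) \<le> (\<Sum>i\<in>{r..<R}. (s i)\<^sup>2)"
proof -
  have split: "(\<Sum>i<L. f i) = (\<Sum>i<r. f i) + (\<Sum>i\<in>{r..<L}. f i)" for f :: "nat \<Rightarrow> real"
    using assms(1,2) by (simp add: lessThan_atLeast0 sum.atLeastLessThan_concat)
  have "0 \<le> (\<Sum>i\<in>{r..<L}. (s i)\<^sup>2 * q i)"
    using q by (intro sum_nonneg) auto
  then show "0 \<le> (\<Sum>i<L. (s i)\<^sup>2 * q i) - (\<Sum>i<r. (s i)\<^sup>2 * q i)"
    unfolding split by simp
  have "(\<Sum>i\<in>{r..<L}. (s i)\<^sup>2 * q i) \<le> (\<Sum>i\<in>{r..<L}. (s i)\<^sup>2)"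
    using q by (intro sum_mono) (simp add: mult_left_le)
  also have "\<dots> = (\<Sum>i\<in>{r..<R}. (s i)\<^sup>2) + (\<Sum>i\<in>{R..<L}. (s i)\<^sup>2)"
    using assms(1,2) by (simp add: sum.atLeastLessThan_concat)
  also have "(\<Sum>i\<in>{R..<L}. (s i)\<^sup>2) = 0"
    using s by simp
  finally show "(\<Sum>i<L. (s i)\<^sup>2 * q i) - (\<Sum>i<r. (s i)\<^sup>2 * q i) \<le> (\<Sum>i\<in>{r..<R}. (s i)\<^sup>2)"
    unfolding split by simp
qed

theorem lemma4:
  fixes N Ny M r :: nat and X Yt U Sig V :: "real mat" and lam :: real and S :: "nat set"
  assumes X: "X \<in> carrier_mat N M"
    and Yt: "Yt \<in> carrier_mat Ny M"
    and lam: "lam \<ge> 0"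
    and U: "U \<in> carrier_mat Ny Ny" "transpose_mat U * U = 1\<^sub>m Ny" "U * transpose_mat U = 1\<^sub>m Ny"
    and V: "V \<in> carrier_mat M M" "transpose_mat V * V = 1\<^sub>m M" "V * transpose_mat V = 1\<^sub>m M"
    and Sig: "Sig \<in> carrier_mat Ny M"
      "\<And>i j. i < Ny \<Longrightarrow> j < M \<Longrightarrow> i \<noteq> j \<Longrightarrow> Sig $$ (i, j) = 0"
      "\<And>i. i < min Ny M \<Longrightarrow> Sig $$ (i, i) \<ge> 0"
      "\<And>i j. i \<le> j \<Longrightarrow> j < min Ny M \<Longrightarrow> Sig $$ (j, j) \<le> Sig $$ (i, i)"
    and svd: "Yt = U * Sig * V"
    and r: "r \<le> vec_space.rank Ny Yt"
    and S: "S \<subseteq> {0..<N}"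
    and pd: "S = {} \<or> pos_def_mat (gram_reg X lam S)"
  shows "0 \<le> J X Yt lam S - J X (mat r M (\<lambda>(i, j). Sig $$ (i, i) * V $$ (i, j))) lam S
       \<and> J X Yt lam S - J X (mat r M (\<lambda>(i, j). Sig $$ (i, i) * V $$ (i, j))) lam S
           \<le> (\<Sum>i\<in>{r..<vec_space.rank Ny Yt}. (Sig $$ (i, i))\<^sup>2)"
proof -
  define R where "R = vec_space.rank Ny Yt"
  define Z where "Z = mat r M (\<lambda>(i, j). Sig $$ (i, i) * V $$ (i, j))"
  define H where "H = ridge_hat_mat X lam S"
  define q where "q i = row V i \<bullet> (H *\<^sub>v row V i)" for i
  have "R \<le> min Ny M"
    using vec_space.rank_le_nc[OF Yt] vec_space.rank_le_nr[OF Yt] unfolding R_def by simp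
  show ?thesis
  proof (cases "S = {}")
    case False
    then have pos_def: "pos_def_mat (gram_reg X lam S)"
      using pd by simp
    have H: "H \<in> carrier_mat M M"
      unfolding H_def by (rule ridge_hat_mat_carrier[OF X S pos_def])
    have "J X Yt lam S = (\<Sum>i<min Ny M. (Sig $$ (i, i))\<^sup>2 * q i)"
      using J_eq_trace_ridge_hat_mat[OF X S pos_def False Yt]
        mat_trace_svd_quadratic[OF U(1,2) Sig(1,2) V(1) H]
      unfolding svd H_def q_def by simp
    moreover have "J X Z lam S = (\<Sum>i<r. (Sig $$ (i, i))\<^sup>2 * q i)"
      using J_eq_trace_ridge_hat_mat[OF X S pos_def False, of Z r]
        mat_trace_truncated_quadratic[OF V(1) H, of r Sig] \<open>R \<le> min Ny M\<close> r unfolding Z_def H_def q_def R_def by simp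
    moreover have "0 \<le> q i \<and> q i \<le> 1" if "i < min Ny M" for i
      using ridge_hat_mat_quadratic_form_bounds[OF X S pos_def lam, of "row V i"]
        orthogonal_mat_row_norm[OF V(1,3)] row_carrier_vec[OF _ V(1), of i] that unfolding q_def H_def by simp
    moreover have "Sig $$ (i, i) = 0" if "R \<le> i" "i < min Ny M" for i
      using svd_diag_eq_0_beyond_rank[OF U(1,2) V(1,3) Sig] svd that unfolding R_def by simp
    ultimately show ?thesis
      using weighted_tail_sum_bounds[of r R "min Ny M" q "\<lambda>i. Sig $$ (i, i)"] r \<open>R \<le> min Ny M\<close>
      unfolding Z_def R_def by simp
  qed (simp add: J_def sum_nonneg)
qed

end
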